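(* Let $f:\mathbb{R}^n\to\mathbb{R}$ satisfy: (A1) $f\in C^\infty(\mathbb{R}^n)$; (A2) there is $M>0$ such that $f(x)>0$ for all $x\notin B(0,M)$; (A3) $\nabla f(p)\neq 0$ for every $p\in\mathcal{B}:=\{p\in\mathbb{R}^n: f(p)=0\}$, and assume $\mathcal{B}\neq\emptyset$. For $x\in\mathbb{R}^n$ let $d(x)=\min_{p\in\mathcal{B}}\|x-p\|$ and for $\sigma>0$ let $\Omega_\sigma=\{x\in\mathbb{R}^n: d(x)<\sigma\}$. Then for each angle $\alpha\in\left(-\frac{\pi}{4},\frac{\pi}{4}\right)$ there exists $\sigma>0$ such that for every $x\in\Omega_\sigma$ we have $\nabla f(x)\neq 0$, the set \[T(x)=\Big\{t\ge 0:\ x-t\,\mathrm{sgn}(f(x))\,\frac{\nabla f(x)}{\|\nabla f(x)\|}\in\mathcal{B}\Big\}\] is nonempty, and its smallest element $t(x)=\min T(x)$ satisfies \[ d(x)\le t(x)\le 2\cos(\alpha)\,d(x).\]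
   Context: $\|\cdot\|$ is the Euclidean norm, $B(x,r)$ is the open Euclidean ball of center $x$ and radius $r$, and $\mathrm{sgn}$ is the sign function (with $\mathrm{sgn}(0)=0$). Under (A1)–(A3), $\mathcal{B}$ is a compact smooth hypersurface of $\mathbb{R}^n$, so the minimum defining $d(x)$ is attained. *)

theory Defs
  imports "HOL-Analysis.Analysis"
begin

definition smooth_fun :: "('a::euclidean_space \<Rightarrow> real) \<Rightarrow> bool" where
  "smooth_fun f \<longleftrightarrow> (\<exists>D :: 'a list \<Rightarrow> 'a \<Rightarrow> real.
     D [] = f \<and> (\<forall>vs x. (D vs has_derivative (\<lambda>v. D (v # vs) x)) (at x)))"

definition grad :: "('a::euclidean_space \<Rightarrow> real) \<Rightarrow> 'a \<Rightarrow> 'a" where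
  "grad f x = (\<Sum>i\<in>Basis. frechet_derivative f (at x) i *\<^sub>R i)"

definition zero_set :: "('a::euclidean_space \<Rightarrow> real) \<Rightarrow> 'a set" where
  "zero_set f = {p. f p = 0}"

text \<open>Distance to the zero set (the minimum is attained under the hypotheses).\<close>
definition dist_B :: "('a::euclidean_space \<Rightarrow> real) \<Rightarrow> 'a \<Rightarrow> real" where
  "dist_B f x = infdist x (zero_set f)"

definition Omega :: "('a::euclidean_space \<Rightarrow> real) \<Rightarrow> real \<Rightarrow> 'a set" where
  "Omega f \<sigma> = {x. dist_B f x < \<sigma>}"

definition Tset :: "('a::euclidean_space \<Rightarrow> real) \<Rightarrow> 'a \<Rightarrow> real set" where
  "Tset f x = {t. t \<ge> 0 \<and>
     x - (t * sgn (f x)) *\<^sub>R ((1 / norm (grad f x)) *\<^sub>R grad f x) \<in> zero_set f}"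

end

(*
  Near the compact zero set B the gradient is bounded away from 0 and, by uniform continuity,
  its oscillation on a ball of radius c d(x) around x is a small fraction of its size.  Let p be
  a nearest point of B.  Linearising f at x gives |f x| <= d(x) (|grad f x| + e), while moving
  the distance c d(x) along the ray -sgn (f x) grad f x / |grad f x| decreases sgn (f x) f by at
  least c d(x) (|grad f x| - e).  For c = 2 cos alpha > 1 and e <= (c - 1)/(c + 1) |grad f x|
  the sign of f changes, so the ray meets B within distance c d(x); any point of B on it is at
  distance at least d(x) from x.
*)

theory Submission
  imports Defs
begin

lemma smooth_fun_grad:
  fixes f :: "'a::euclidean_space \<Rightarrow> real"
  assumes "smooth_fun f"
  shows smooth_fun_has_derivative_grad: "(f has_derivative (\<lambda>v. grad f x \<bullet> v)) (at x)"
    and smooth_fun_continuous_grad: "continuous_on UNIV (grad f)"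
proof -
  obtain D :: "'a list \<Rightarrow> 'a \<Rightarrow> real" where D0: "D [] = f"
    and D: "\<And>vs x. (D vs has_derivative (\<lambda>v. D (v # vs) x)) (at x)"
    using assms unfolding smooth_fun_def by blast
  have f': "(f has_derivative (\<lambda>v. D [v] x)) (at x)" for x
    using D[of "[]"] D0 by simp
  have grad_eq: "grad f x = (\<Sum>i\<in>Basis. D [i] x *\<^sub>R i)" for x
    unfolding grad_def using frechet_derivative_at[OF f'[of x]] by metis
  have "D [v] x = grad f x \<bullet> v" for v
  proof -
    have lin: "linear (\<lambda>v. D [v] x)" using has_derivative_linear[OF f'] .
    have "D [v] x = D [\<Sum>i\<in>Basis. (v \<bullet> i) *\<^sub>R i] x" by (simp add: euclidean_representation)
    also have "\<dots> = (\<Sum>i\<in>Basis. (v \<bullet> i) * D [i] x)"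
      by (simp add: linear_sum[OF lin] linear_scale[OF lin])
    also have "\<dots> = grad f x \<bullet> v"
      by (simp add: grad_eq inner_sum_left inner_sum_right mult.commute inner_commute)
    finally show ?thesis .
  qed
  then show "(f has_derivative (\<lambda>v. grad f x \<bullet> v)) (at x)"
    using f'[of x] by simp
  have "continuous_on UNIV (D [i])" for i
    using D[of "[i]"] by (meson continuous_at_imp_continuous_on has_derivative_continuous)
  then show "continuous_on UNIV (grad f)"
    unfolding grad_eq[abs_def] by (intro continuous_intros) auto
qed

lemma linearization_error_cball:
  fixes f :: "'a::euclidean_space \<Rightarrow> real"
  assumes f': "\<And>y. (f has_derivative (\<lambda>v. G y \<bullet> v)) (at y)"
    and osc: "\<And>y. y \<in> cball x r \<Longrightarrow> norm (G y - G x) \<le> e"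
    and a: "a \<in> cball x r" and b: "b \<in> cball x r"
  shows "\<bar>f b - f a - G x \<bullet> (b - a)\<bar> \<le> norm (b - a) * e"
proof -
  have segment: "a + t *\<^sub>R (b - a) \<in> cball x r" if "t \<in> {0..1}" for t
    using convexD[OF convex_cball a b, of "1 - t" t] that by (simp add: algebra_simps)
  have "onorm ((\<lambda>v. G y \<bullet> v) - (\<lambda>v. G x \<bullet> v)) \<le> e" if "y \<in> cball x r" for y
  proof (rule onorm_le)
    fix v
    have "\<bar>(G y - G x) \<bullet> v\<bar> \<le> norm (G y - G x) * norm v" by (rule Cauchy_Schwarz_ineq2)
    also have "\<dots> \<le> e * norm v" using osc[OF that] by (simp add: mult_right_mono)
    finally show "norm (((\<lambda>v. G y \<bullet> v) - (\<lambda>v. G x \<bullet> v)) v) \<le> e * norm v"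
      by (simp add: inner_diff_left)
  qed
  moreover have "x \<in> cball x r" using a by (auto intro: order_trans[OF zero_le_dist])
  ultimately show ?thesis
    using differentiable_bound_linearization[OF segment has_derivative_at_withinI[OF f']]
    by simp
qed

lemma one_less_two_cos:
  fixes \<alpha> :: real
  assumes "\<bar>\<alpha>\<bar> < pi / 3"
  shows "1 < 2 * cos \<alpha>"
proof -
  have "cos (pi / 3) < cos \<bar>\<alpha>\<bar>"
    by (rule cos_monotone_0_pi) (use assms in auto)
  then show ?thesis by (simp add: cos_60)
qed

lemma compact_zero_set:
  fixes f :: "'a::euclidean_space \<Rightarrow> real"
  assumes "continuous_on UNIV f" and "\<forall>x. x \<notin> ball 0 M \<longrightarrow> f x > 0"
  shows "compact (zero_set f)"
proof (rule compact_eq_bounded_closed[THEN iffD2, OF conjI])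
  show "bounded (zero_set f)"
    using assms(2) by (intro bounded_subset[OF bounded_ball, of _ 0 M]) (force simp: zero_set_def)
  show "closed (zero_set f)"
    unfolding zero_set_def using closed_Collect_eq[OF assms(1) continuous_on_const] .
qed

lemma compact_norm_bounded_below:
  fixes G :: "'a::topological_space \<Rightarrow> 'b::real_normed_vector"
  assumes "compact S" "continuous_on S G" "\<forall>p\<in>S. G p \<noteq> 0"
  obtains m where "m > 0" "\<And>p. p \<in> S \<Longrightarrow> m \<le> norm (G p)"
proof (cases "S = {}")
  case False
  then obtain p0 where "p0 \<in> S" "\<And>p. p \<in> S \<Longrightarrow> norm (G p0) \<le> norm (G p)"
    using continuous_attains_inf[OF assms(1) False continuous_on_norm[OF assms(2)]] by blast
  with assms(3) show ?thesis by (intro that[of "norm (G p0)"]) auto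
qed (intro that[of 1], auto)

lemma uniformly_continuous_near_compact:
  fixes G :: "'a::heine_borel \<Rightarrow> 'b::metric_space"
  assumes "compact S" "continuous_on UNIV G" "e > 0"
  obtains \<delta> where "\<delta> > 0" "\<And>p y. p \<in> S \<Longrightarrow> dist y p < \<delta> \<Longrightarrow> dist (G y) (G p) < e"
proof -
  obtain a r where S: "S \<subseteq> cball a r"
    using compact_imp_bounded[OF assms(1)] bounded_subset_cball by blast
  define K where "K = cball a (r + 1)"
  have "uniformly_continuous_on K G"
    unfolding K_def by (rule compact_uniformly_continuous[OF continuous_on_subset[OF assms(2)]]) auto
  then obtain \<delta> where \<delta>: "\<delta> > 0" "\<And>p y. p \<in> K \<Longrightarrow> y \<in> K \<Longrightarrow> dist y p < \<delta> \<Longrightarrow> dist (G y) (G p) < e"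
    using assms(3) unfolding uniformly_continuous_on_def by metis
  show ?thesis
  proof (rule that[of "min \<delta> 1"])
    fix p y assume "p \<in> S" "dist y p < min \<delta> 1"
    moreover from this have "p \<in> K" "y \<in> K"
      using S dist_triangle[of a y p] unfolding K_def by (auto simp: dist_commute)
    ultimately show "dist (G y) (G p) < e" using \<delta>(2) by simp
  qed (use \<delta> in simp)
qed

lemma relative_oscillation_near_compact:
  fixes G :: "'a::heine_borel \<Rightarrow> 'b::real_normed_vector"
  assumes "compact S" "continuous_on UNIV G" "\<forall>p\<in>S. G p \<noteq> 0" "1 < c"
  obtains \<sigma> where "\<sigma> > 0" and "\<And>p x. p \<in> S \<Longrightarrow> dist x p < \<sigma> \<Longrightarrow> G x \<noteq> 0"
    and "\<And>p x y. p \<in> S \<Longrightarrow> dist x p < \<sigma> \<Longrightarrow> y \<in> cball x (c * dist x p) \<Longrightarrow>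
           (1 + c) * norm (G y - G x) \<le> (c - 1) * norm (G x)"
proof -
  obtain m where m: "m > 0" "\<And>p. p \<in> S \<Longrightarrow> m \<le> norm (G p)"
    using compact_norm_bounded_below[OF assms(1) continuous_on_subset[OF assms(2)] assms(3)] by blast
  define \<eta> where "\<eta> = (c - 1) * m / (4 * (c + 1))"
  have \<eta>: "\<eta> > 0" "\<eta> < m / 2"
    using m(1) assms(4) by (simp_all add: \<eta>_def field_simps add_pos_pos)
  obtain \<delta> where \<delta>: "\<delta> > 0" "\<And>p y. p \<in> S \<Longrightarrow> dist y p < \<delta> \<Longrightarrow> norm (G y - G p) < \<eta>"
    using uniformly_continuous_near_compact[OF assms(1,2) \<eta>(1)] by (metis dist_norm)
  define \<sigma> where "\<sigma> = \<delta> / (c + 1)"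
  have close: "norm (G y - G p) < \<eta>" if "p \<in> S" "dist x p < \<sigma>" "y \<in> cball x (c * dist x p)" for p x y
  proof -
    have "dist y p \<le> dist y x + dist x p" by (rule dist_triangle)
    also have "\<dots> \<le> (c + 1) * dist x p" using that(3) by (simp add: dist_commute algebra_simps)
    also have "\<dots> < \<delta>" using that(2) assms(4) by (simp add: \<sigma>_def field_simps)
    finally show ?thesis using \<delta>(2) that(1) by blast
  qed
  have centre: "x \<in> cball x (c * dist x p)" for x p :: 'a
    using assms(4) by simp
  have large: "m / 2 < norm (G x)" if "p \<in> S" "dist x p < \<sigma>" for p x
    using close[OF that centre] m(2)[OF that(1)] \<eta>(2) norm_triangle_ineq2[of "G p" "G x"]
    by (simp add: norm_minus_commute)
  show ?thesis
  proof (rule that)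
    show "\<sigma> > 0" using \<delta>(1) assms(4) by (simp add: \<sigma>_def)
    show "G x \<noteq> 0" if "p \<in> S" "dist x p < \<sigma>" for p x
      using large[OF that] m(1) by auto
    fix p x y assume p: "p \<in> S" "dist x p < \<sigma>" and y: "y \<in> cball x (c * dist x p)"
    have "norm (G y - G x) \<le> norm (G y - G p) + norm (G x - G p)"
      using norm_triangle_ineq4[of "G y - G p" "G x - G p"] by simp
    also have "\<dots> \<le> 2 * \<eta>" using close[OF p y] close[OF p centre] by simp
    finally have "(1 + c) * norm (G y - G x) \<le> (1 + c) * (2 * \<eta>)"
      using assms(4) by (intro mult_left_mono) auto
    also have "\<dots> = (c - 1) * (m / 2)" using assms(4) by (simp add: \<eta>_def field_simps)
    also have "\<dots> \<le> (c - 1) * norm (G x)" using large[OF p] assms(4) by (intro mult_left_mono) auto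
    finally show "(1 + c) * norm (G y - G x) \<le> (c - 1) * norm (G x)" .
  qed
qed

lemma sgn_mult_nonpos_along_gradient_ray:
  fixes f :: "'a::euclidean_space \<Rightarrow> real"
  assumes f': "\<And>y. (f has_derivative (\<lambda>v. G y \<bullet> v)) (at y)"
    and osc: "\<And>y. y \<in> cball x (c * d) \<Longrightarrow> (1 + c) * norm (G y - G x) \<le> (c - 1) * norm (G x)"
    and p: "f p = 0" "dist x p \<le> d" and c: "1 \<le> c" and Gx: "G x \<noteq> 0"
  shows "sgn (f x) * f (x - (c * d * sgn (f x)) *\<^sub>R ((1 / norm (G x)) *\<^sub>R G x)) \<le> 0"
proof (cases "f x = 0")
  case False
  define s where "s = sgn (f x)"
  define w where "w = s *\<^sub>R ((1 / norm (G x)) *\<^sub>R G x)"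
  define \<epsilon> where "\<epsilon> = (c - 1) * norm (G x) / (1 + c)"
  have s: "s * s = 1" "s * f x = \<bar>f x\<bar>"
    using False by (auto simp: s_def sgn_if)
  have w: "norm w = 1" "G x \<bullet> w = s * norm (G x)"
    using Gx s(1) by (auto simp: w_def abs_sgn_eq s_def dot_square_norm power2_eq_square)
  have d: "0 \<le> d" using p(2) zero_le_dist order_trans by blast
  have osc': "norm (G y - G x) \<le> \<epsilon>" if "y \<in> cball x (c * d)" for y
    using osc[OF that] c by (simp add: \<epsilon>_def field_simps)
  have x_in: "x \<in> cball x (c * d)" and p_in: "p \<in> cball x (c * d)"
    using c d p(2) mult_right_mono[of 1 c d] by auto
  have ray_in: "x - (c * d) *\<^sub>R w \<in> cball x (c * d)"
    using w(1) c d by (simp add: dist_norm)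
  have "\<bar>f (x - (c * d) *\<^sub>R w) - f x + c * d * (s * norm (G x))\<bar> \<le> c * d * \<epsilon>"
    using linearization_error_cball[OF f' osc' x_in ray_in] w c d by (simp add: inner_minus_right)
  then have ray: "s * f (x - (c * d) *\<^sub>R w) \<le> \<bar>f x\<bar> - c * d * norm (G x) + c * d * \<epsilon>"
    using s by (cases "s = 1") (auto simp: s_def sgn_if abs_le_iff algebra_simps split: if_splits)
  have "\<bar>f x - G x \<bullet> (x - p)\<bar> \<le> norm (x - p) * \<epsilon>"
    using linearization_error_cball[OF f' osc' p_in x_in] p(1) by simp
  moreover have "\<bar>G x \<bullet> (x - p)\<bar> \<le> norm (G x) * norm (x - p)" by (rule Cauchy_Schwarz_ineq2)
  ultimately have "\<bar>f x\<bar> \<le> norm (x - p) * (\<epsilon> + norm (G x))" by (simp add: algebra_simps)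
  also have "\<dots> \<le> d * (\<epsilon> + norm (G x))"
    using p(2) c by (intro mult_right_mono) (auto simp: dist_norm \<epsilon>_def)
  finally have "s * f (x - (c * d) *\<^sub>R w) \<le> d * ((1 + c) * \<epsilon> - (c - 1) * norm (G x))"
    using ray by (simp add: algebra_simps)
  also have "\<dots> = 0" using c by (simp add: \<epsilon>_def)
  finally show ?thesis by (simp add: s_def w_def)
qed simp

lemma Tset_eq:
  "Tset f x = {t. 0 \<le> t \<and> f (x - (t * sgn (f x)) *\<^sub>R ((1 / norm (grad f x)) *\<^sub>R grad f x)) = 0}"
  by (simp add: Tset_def zero_set_def)

lemma Tset_meets_interval:
  fixes f :: "'a::euclidean_space \<Rightarrow> real"
  assumes f': "\<And>y. (f has_derivative (\<lambda>v. grad f y \<bullet> v)) (at y)"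
    and osc: "\<And>y. y \<in> cball x (c * d) \<Longrightarrow>
               (1 + c) * norm (grad f y - grad f x) \<le> (c - 1) * norm (grad f x)"
    and p: "f p = 0" "dist x p \<le> d" and c: "1 \<le> c" and "grad f x \<noteq> 0"
  shows "\<exists>t\<in>Tset f x. t \<le> c * d"
proof -
  define h where "h t = sgn (f x) * f (x - (t * sgn (f x)) *\<^sub>R ((1 / norm (grad f x)) *\<^sub>R grad f x))"
    for t
  have "h (c * d) \<le> 0"
    unfolding h_def by (rule sgn_mult_nonpos_along_gradient_ray[OF f' osc p c \<open>grad f x \<noteq> 0\<close>])
  moreover have "0 \<le> h 0" by (simp add: h_def sgn_if)
  moreover have "0 \<le> c * d"
    using c p(2) zero_le_dist[of x p] by (simp add: order_trans[of 0 "dist x p" d])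
  moreover have "isCont h t" for t
    unfolding h_def
    by (intro continuous_intros isCont_o2[where g=f, OF _ has_derivative_continuous[OF f']])
  ultimately obtain t where "0 \<le> t" "t \<le> c * d" "h t = 0"
    using IVT2[of h "c * d" 0 0] by blast
  then show ?thesis by (auto simp: Tset_eq h_def sgn_if split: if_splits)
qed

text \<open>No hypotheses are needed: the direction vector has norm at most 1 also when
  \<^term>\<open>sgn (f x) = 0\<close> or \<^term>\<open>grad f x = 0\<close> (where division by 0 gives 0).\<close>
lemma dist_B_le_Tset:
  assumes t: "t \<in> Tset f x"
  shows "dist_B f x \<le> t"
proof -
  let ?v = "(t * sgn (f x)) *\<^sub>R ((1 / norm (grad f x)) *\<^sub>R grad f x)"
  have "dist_B f x \<le> dist x (x - ?v)"
    using t unfolding dist_B_def Tset_def by (blast intro: infdist_le)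
  also have "\<dots> = t * (\<bar>sgn (f x)\<bar> * norm ((1 / norm (grad f x)) *\<^sub>R grad f x))"
    using t by (simp add: Tset_def dist_norm abs_mult)
  also have "\<dots> \<le> t"
    using t by (intro mult_left_le mult_le_one) (auto simp: Tset_def abs_sgn_eq)
  finally show ?thesis .
qed

lemma Tset_has_least:
  assumes "continuous_on UNIV f" and t0: "t0 \<in> Tset f x"
  obtains t where "t \<in> Tset f x" "\<forall>s\<in>Tset f x. t \<le> s" "t \<le> t0"
proof -
  have "continuous_on UNIV (\<lambda>t. f (x - (t * sgn (f x)) *\<^sub>R u))" for u
    by (rule continuous_on_compose2[OF assms(1)]) (auto intro!: continuous_intros)
  then have "closed (Tset f x)"
    unfolding Tset_eq by (intro closed_Collect_conj closed_Collect_le closed_Collect_eq continuous_intros)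
  moreover have "bdd_below (Tset f x)"
    by (rule bdd_belowI[of _ 0]) (simp add: Tset_def)
  ultimately show ?thesis
    using closed_contains_Inf[of "Tset f x"] cInf_lower[of _ "Tset f x"] t0 that by blast
qed

theorem theorem2:
  fixes f :: "real ^ 'n \<Rightarrow> real" and M :: real and \<alpha> :: real
  assumes A1: "smooth_fun f"
    and A2: "M > 0" "\<forall>x. x \<notin> ball 0 M \<longrightarrow> f x > 0"
    and A3: "\<forall>p \<in> zero_set f. grad f p \<noteq> 0"
    and Bne: "zero_set f \<noteq> {}"
    and \<alpha>: "- (pi / 4) < \<alpha>" "\<alpha> < pi / 4"
  shows "\<exists>\<sigma>>0. \<forall>x \<in> Omega f \<sigma>.
           grad f x \<noteq> 0 \<and> Tset f x \<noteq> {} \<and>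
           (\<exists>t. t \<in> Tset f x \<and> (\<forall>s \<in> Tset f x. t \<le> s) \<and>
                dist_B f x \<le> t \<and> t \<le> 2 * cos \<alpha> * dist_B f x)"
proof -
  note f' = smooth_fun_has_derivative_grad[OF A1]
  have cont: "continuous_on UNIV f"
    using f' by (meson continuous_at_imp_continuous_on has_derivative_continuous)
  have B: "compact (zero_set f)" by (rule compact_zero_set[OF cont A2(2)])
  define c where "c = 2 * cos \<alpha>"
  have c: "1 < c" unfolding c_def using \<alpha> by (intro one_less_two_cos) auto
  obtain \<sigma> where "\<sigma> > 0" and grad_nonzero: "\<And>p x. p \<in> zero_set f \<Longrightarrow> dist x p < \<sigma> \<Longrightarrow> grad f x \<noteq> 0"
    and osc: "\<And>p x y. p \<in> zero_set f \<Longrightarrow> dist x p < \<sigma> \<Longrightarrow> y \<in> cball x (c * dist x p) \<Longrightarrow>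
                (1 + c) * norm (grad f y - grad f x) \<le> (c - 1) * norm (grad f x)"
    using relative_oscillation_near_compact[OF B smooth_fun_continuous_grad[OF A1] A3 c] by metis
  moreover have "grad f x \<noteq> 0 \<and> Tset f x \<noteq> {} \<and> (\<exists>t. t \<in> Tset f x \<and> (\<forall>s \<in> Tset f x. t \<le> s) \<and>
                dist_B f x \<le> t \<and> t \<le> c * dist_B f x)" if "x \<in> Omega f \<sigma>" for x
  proof -
    obtain p where p: "p \<in> zero_set f" "dist_B f x = dist x p"
      using infdist_attains_inf[OF compact_imp_closed[OF B] Bne] unfolding dist_B_def by metis
    with that have near: "dist x p < \<sigma>" by (simp add: Omega_def)
    obtain t0 where "t0 \<in> Tset f x" "t0 \<le> c * dist x p"
      using Tset_meets_interval[OF f' osc[OF p(1) near] _ order_refl less_imp_le[OF c]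
          grad_nonzero[OF p(1) near]] p(1) by (auto simp: zero_set_def)
    then obtain t where "t \<in> Tset f x" "\<forall>s\<in>Tset f x. t \<le> s" "t \<le> c * dist_B f x"
      using Tset_has_least[OF cont] p(2) by (metis order_trans)
    then show ?thesis using grad_nonzero[OF p(1) near] dist_B_le_Tset by blast
  qed
  ultimately show ?thesis unfolding c_def by blast
qed

end
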